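(* Let $X=[-1,1]\times[0,e^{-2\pi}]$, $X_1=\{(x,y)\in X:y=0,\ x>0\}\cup\{(x,y)\in X:y>0,\ x>y\sin(-\log y)\}$, $X_2=\{(x,y)\in X:y=0,\ x<0\}\cup\{(x,y)\in X:y>0,\ x<y\sin(-\log y)\}$, $f_1(x,y)=e^{-\pi}(x,y)$ and $f_2(x,y)=\left(-\tfrac12+\tfrac12(x+\tfrac12),\ \tfrac12 y\right)$. Let $f:X\to X$ be any map with $f|_{X_1}=f_1$ and $f|_{X_2}=f_2$. Then for every $n\ge2$ there is an atom of generation $n$ of $f$ which is disconnected and has infinitely many connected components.
   Context: For $A\subset X$ let $F_i(A):=\overline{f(A\cap X_i)}$ ($i=1,2$). An atom of generation $n\ge1$ is a set of the form $F_{i_n}\circ\cdots\circ F_{i_1}(X)$ with $i_1,\dots,i_n\in\{1,2\}$. *)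

theory Defs
  imports "HOL-Analysis.Analysis"
begin

definition XX :: "(real \<times> real) set" where
  "XX = {-1..1} \<times> {0..exp (-2*pi)}"

definition X1 :: "(real \<times> real) set" where
  "X1 = {(x, y) \<in> XX. y = 0 \<and> x > 0} \<union> {(x, y) \<in> XX. y > 0 \<and> x > y * sin (- ln y)}"

definition X2 :: "(real \<times> real) set" where
  "X2 = {(x, y) \<in> XX. y = 0 \<and> x < 0} \<union> {(x, y) \<in> XX. y > 0 \<and> x < y * sin (- ln y)}"

definition f1 :: "real \<times> real \<Rightarrow> real \<times> real" where
  "f1 = (\<lambda>(x, y). (exp (-pi) * x, exp (-pi) * y))"

definition f2 :: "real \<times> real \<Rightarrow> real \<times> real" where
  "f2 = (\<lambda>(x, y). (-1/2 + 1/2 * (x + 1/2), 1/2 * y))"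

definition Xi :: "nat \<Rightarrow> (real \<times> real) set" where
  "Xi i = (if i = 1 then X1 else X2)"

definition Fi :: "(real \<times> real \<Rightarrow> real \<times> real) \<Rightarrow> nat \<Rightarrow> (real \<times> real) set \<Rightarrow> (real \<times> real) set" where
  "Fi f i A = closure (f ` (A \<inter> Xi i))"

text \<open>The atom F_{i_n} \<circ> ... \<circ> F_{i_1}(X) for the index list [i_1, ..., i_n].\<close>
definition atom :: "(real \<times> real \<Rightarrow> real \<times> real) \<Rightarrow> nat list \<Rightarrow> (real \<times> real) set" where
  "atom f is = fold (\<lambda>i A. Fi f i A) is XX"

end

theory Submission
  imports Defs
begin

text \<open>
  Consider the atom \<open>F\<^sub>2\<^sup>n\<^sup>-\<^sup>1(F\<^sub>1(X))\<close>. Call \<open>y > 0\<close> a gap height if \<open>sin (- ln y) < 0\<close>.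
  At a gap height, \<open>X\<^sub>2\<close> lies strictly left of the \<open>y\<close>-axis, whereas \<open>f\<^sub>1(X\<^sub>1)\<close> lies strictly
  right of it: \<open>f\<^sub>1\<close> scales by \<open>e\<^sup>-\<^sup>\<pi>\<close>, which shifts the phase of \<open>sin (- ln y)\<close> by \<open>\<pi>\<close>.
  Hence \<open>F\<^sub>1(X) \<inter> X\<^sub>2\<close> contains no point at a gap height, and since \<open>f\<^sub>2\<close> halves heights,
  no point of \<open>F\<^sub>2\<^sup>k(F\<^sub>1(X))\<close> has \<open>2\<^sup>k\<close> times its height at a gap height. On the other
  hand the points \<open>(0, y)\<close> with \<open>sin (- ln y) = 1\<close> lie in \<open>F\<^sub>1(X) \<inter> X\<^sub>2\<close> and their
  \<open>f\<^sub>2\<close>-orbits stay in \<open>X\<^sub>2\<close>, so the atom contains infinitely many points whose heights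
  are pairwise separated by (scaled) gap heights: they lie in distinct components.
\<close>

definition gap_heights :: "real set" where
  "gap_heights = {y. 0 < y \<and> sin (- ln y) < 0}"

lemma open_gap_heights: "open gap_heights"
proof -
  have "continuous_on {0<..} (\<lambda>y::real. sin (- ln y))"
    by (intro continuous_intros) auto
  then have "open ({0<..} \<inter> (\<lambda>y::real. sin (- ln y)) -` {..<0})"
    by (rule continuous_open_preimage) auto
  moreover have "{0<..} \<inter> (\<lambda>y::real. sin (- ln y)) -` {..<0} = gap_heights"
    by (auto simp: gap_heights_def)
  ultimately show ?thesis by metis
qed

lemma sin_minus_ln_exp_minus_pi_times:
  "0 < y \<Longrightarrow> sin (- ln (exp (- pi) * y)) = - sin (- ln y)"
  by (simp add: ln_mult)

lemma X2_left_at_gap_heights: "(x, y) \<in> X2 \<Longrightarrow> y \<in> gap_heights \<Longrightarrow> x < 0"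
  unfolding X2_def gap_heights_def
  by (auto dest: mult_pos_neg[of y "sin (- ln y)"])

lemma f1_X1_right_at_gap_heights: "(x, y) \<in> f1 ` X1 \<Longrightarrow> y \<in> gap_heights \<Longrightarrow> 0 < x"
proof -
  assume "(x, y) \<in> f1 ` X1" and gap: "y \<in> gap_heights"
  then obtain u v where uv: "(u, v) \<in> X1" "x = exp (- pi) * u" "y = exp (- pi) * v"
    by (auto simp: f1_def)
  have "0 < v" using gap uv(3) by (auto simp: gap_heights_def zero_less_mult_iff)
  moreover have "sin (- ln y) = - sin (- ln v)"
    using uv(3) \<open>0 < v\<close> sin_minus_ln_exp_minus_pi_times by simp
  ultimately have "0 < sin (- ln v)" using gap by (simp add: gap_heights_def)
  with \<open>0 < v\<close> uv(1) have "0 < u"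
    unfolding X1_def by (auto dest: mult_pos_pos[of v "sin (- ln v)"])
  then show "0 < x" using uv(2) by simp
qed

lemma closure_f1_X1_Int_X2_avoids_gap_heights:
  assumes "q \<in> closure (f1 ` X1)" "q \<in> X2"
  shows "snd q \<notin> gap_heights"
proof -
  let ?W = "fst -` {..<0::real} \<inter> snd -` gap_heights"
  have "open ?W"
    by (intro open_Int open_vimage_fst open_vimage_snd open_gap_heights open_lessThan)
  moreover have "?W \<inter> f1 ` X1 = {}"
    using f1_X1_right_at_gap_heights[of "fst q" "snd q" for q] by fastforce
  ultimately have "?W \<inter> closure (f1 ` X1) = {}"
    by (simp add: open_Int_closure_eq_empty)
  then show ?thesis using assms X2_left_at_gap_heights[of "fst q" "snd q"] by force
qed

definition spiral_atom :: "nat \<Rightarrow> (real \<times> real) set" where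
  "spiral_atom k = ((\<lambda>A. closure (f2 ` (A \<inter> X2))) ^^ k) (closure (f1 ` X1))"

lemma spiral_atom_Suc: "spiral_atom (Suc k) = closure (f2 ` (spiral_atom k \<inter> X2))"
  by (simp add: spiral_atom_def)

lemma atom_one_replicate_two:
  assumes "\<forall>p\<in>X1. f p = f1 p" and "\<forall>p\<in>X2. f p = f2 p"
  shows "atom f (1 # replicate k 2) = spiral_atom k"
proof -
  have "Fi f 1 XX = closure (f1 ` X1)"
    using assms(1) by (auto simp: Fi_def Xi_def X1_def intro!: arg_cong[where f = closure])
  moreover have "Fi f 2 = (\<lambda>A. closure (f2 ` (A \<inter> X2)))"
    using assms(2) by (auto simp: Fi_def Xi_def fun_eq_iff intro!: arg_cong[where f = closure])
  ultimately show ?thesis by (simp add: atom_def spiral_atom_def)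
qed

lemma funpow_f2: "(f2 ^^ k) (x, y) = (-1/2 + (x + 1/2) / 2^k, y / 2^k)"
  by (induction k) (simp_all add: f2_def field_simps)

lemma spiral_atom_Suc_heights:
  assumes "\<forall>q \<in> spiral_atom k \<inter> X2. 2^k * snd q \<notin> gap_heights"
  shows "spiral_atom (Suc k) \<subseteq> {q. 2^Suc k * snd q \<notin> gap_heights}"
  unfolding spiral_atom_Suc
proof (rule closure_minimal)
  have scale: "2^Suc k * snd (f2 q) = 2^k * snd q" for q :: "real \<times> real"
    by (simp add: f2_def split_def)
  then show "f2 ` (spiral_atom k \<inter> X2) \<subseteq> {q. 2^Suc k * snd q \<notin> gap_heights}"
    using assms by (simp only: image_subset_iff mem_Collect_eq)
  have "closed ((\<lambda>q::real \<times> real. 2^Suc k * snd q) -` (- gap_heights))"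
    by (intro continuous_closed_vimage open_gap_heights[unfolded open_closed] continuous_intros)
  then show "closed {q::real \<times> real. 2^Suc k * snd q \<notin> gap_heights}"
    by (simp add: vimage_def)
qed

lemma spiral_atom_Int_X2_heights: "q \<in> spiral_atom k \<inter> X2 \<Longrightarrow> 2^k * snd q \<notin> gap_heights"
proof (induction k arbitrary: q)
  case 0
  then show ?case using closure_f1_X1_Int_X2_avoids_gap_heights by (simp add: spiral_atom_def)
next
  case (Suc k)
  then show ?case using spiral_atom_Suc_heights[of k] by blast
qed

lemma spiral_atom_heights: "q \<in> spiral_atom (Suc k) \<Longrightarrow> 2^Suc k * snd q \<notin> gap_heights"
  using spiral_atom_Suc_heights spiral_atom_Int_X2_heights by blast

definition turning_height :: "nat \<Rightarrow> real" where
  "turning_height m = exp (- (real (Suc (2*m)) * pi / 2))"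

lemma sin_minus_ln_turning_height: "sin (- ln (turning_height m)) = (-1)^m"
  unfolding turning_height_def ln_exp minus_minus by (rule sin_cos_npi)

lemma turning_height_pos: "0 < turning_height m"
  by (simp add: turning_height_def)

lemma turning_height_strict_antimono: "m < m' \<Longrightarrow> turning_height m' < turning_height m"
  by (simp add: turning_height_def divide_strict_right_mono)

lemma turning_height_le: "2 \<le> m \<Longrightarrow> turning_height m \<le> exp (-2*pi)"
  by (simp add: turning_height_def)

lemma exp_minus_pi_turning_height: "exp (- pi) * turning_height m = turning_height (Suc m)"
  by (simp add: turning_height_def flip: exp_add) (simp add: field_simps)

lemma zero_turning_height_mem_f1_X1:
  assumes "odd m" "2 \<le> m"
  shows "(0, turning_height (Suc m)) \<in> f1 ` X1"
proof -
  have "sin (- ln (turning_height m)) = -1"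
    using sin_minus_ln_turning_height[of m] assms(1) by (simp add: neg_one_odd_power)
  then have "(0, turning_height m) \<in> X1"
    using assms turning_height_pos[of m] turning_height_le[of m] by (simp add: X1_def XX_def)
  moreover have "f1 (0, turning_height m) = (0, turning_height (Suc m))"
    by (simp add: f1_def exp_minus_pi_turning_height)
  ultimately show ?thesis by (metis image_eqI)
qed

lemma zero_turning_height_mem_X2:
  assumes "even m" "2 \<le> m"
  shows "(0, turning_height m) \<in> X2"
proof -
  have "sin (- ln (turning_height m)) = 1"
    using sin_minus_ln_turning_height[of m] assms(1) by (simp add: neg_one_even_power)
  then show ?thesis
    using assms turning_height_pos[of m] turning_height_le[of m] by (simp add: X2_def XX_def)
qed

lemma exp_minus_two_pi_lt_quarter: "exp (-2*pi) < 1/4"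
proof -
  have "4 < 1 + 2*pi" using pi_gt3 by linarith
  also have "\<dots> \<le> exp (2*pi)" by (rule exp_ge_add_one_self)
  finally show ?thesis by (simp add: exp_minus field_simps)
qed

lemma funpow_Suc_f2_mem_X2:
  assumes "0 < y" "y \<le> exp (-2*pi)"
  shows "(f2 ^^ Suc k) (0, y) \<in> X2"
proof -
  define x' :: real where "x' = -1/2 + (1/2) / 2^Suc k"
  define y' where "y' = y / 2^Suc k"
  have pt: "(f2 ^^ Suc k) (0, y) = (x', y')"
    by (simp only: funpow_f2 x'_def y'_def) simp
  have x: "-1/2 \<le> x'" "x' \<le> -1/4"
    using one_le_power[of "2::real" k] by (simp_all add: x'_def field_simps)
  have y': "0 < y'" "y' \<le> y"
    using assms(1) one_le_power[of "2::real" "Suc k"] by (simp_all add: y'_def field_simps)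
  have "- y' \<le> y' * sin (- ln y')"
    using mult_left_mono[OF sin_ge_minus_one[of "- ln y'"], of y'] \<open>0 < y'\<close> by simp
  then have "x' < y' * sin (- ln y')"
    using x(2) y' assms(2) exp_minus_two_pi_lt_quarter by linarith
  then show ?thesis
    using x y' assms(2) exp_minus_two_pi_lt_quarter unfolding pt X2_def XX_def by auto
qed

lemma funpow_f2_turning_height_mem_spiral_atom:
  "(f2 ^^ k) (0, turning_height (2*i + 4)) \<in> spiral_atom k \<inter> X2"
proof (induction k)
  case 0
  \<comment> \<open>The offset \<open>4\<close> keeps the \<open>f\<^sub>1\<close>-preimage height \<open>turning_height (2*i + 3)\<close> inside \<open>XX\<close>.\<close>
  have "(0, turning_height (Suc (2*i + 3))) \<in> f1 ` X1"
    by (rule zero_turning_height_mem_f1_X1) simp_all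
  moreover have "Suc (2*i + 3) = 2*i + 4" by simp
  ultimately have "(0, turning_height (2*i + 4)) \<in> f1 ` X1" by (simp only:)
  then have "(0, turning_height (2*i + 4)) \<in> closure (f1 ` X1)"
    by (rule closure_subset[THEN subsetD])
  moreover have "(0, turning_height (2*i + 4)) \<in> X2"
    by (rule zero_turning_height_mem_X2) simp_all
  ultimately show ?case by (simp add: spiral_atom_def)
next
  case (Suc k)
  then have "f2 ((f2 ^^ k) (0, turning_height (2*i + 4))) \<in> f2 ` (spiral_atom k \<inter> X2)"
    by (rule imageI)
  then have "(f2 ^^ Suc k) (0, turning_height (2*i + 4)) \<in> f2 ` (spiral_atom k \<inter> X2)"
    by simp
  then have "(f2 ^^ Suc k) (0, turning_height (2*i + 4)) \<in> spiral_atom (Suc k)"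
    unfolding spiral_atom_Suc by (rule closure_subset[THEN subsetD])
  moreover have "(f2 ^^ Suc k) (0, turning_height (2*i + 4)) \<in> X2"
    by (intro funpow_Suc_f2_mem_X2 turning_height_pos turning_height_le) simp
  ultimately show ?case by blast
qed

lemma infinite_components_if_separating_levels:
  fixes S :: "'a::topological_space set" and g :: "'a \<Rightarrow> real"
    and p :: "nat \<Rightarrow> 'a" and c :: "nat \<Rightarrow> real"
  assumes "continuous_on S g" and "\<And>i. p i \<in> S" and "\<And>i. c i \<notin> g ` S"
    and "\<And>i l. i < l \<Longrightarrow> g (p l) < c i \<and> c i < g (p i)"
  shows "infinite (components S)"
proof -
  define K where "K i = connected_component_set S (p i)" for i
  have distinct: "K i \<noteq> K l" if "i < l" for i l
  proof
    assume "K i = K l"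
    then have "p i \<in> K i" "p l \<in> K i"
      using assms(2) by (auto simp: K_def)
    moreover have "connected (g ` K i)"
      unfolding K_def by (intro connected_continuous_image continuous_on_subset[OF assms(1)])
        (auto simp: connected_component_subset)
    ultimately have "{g (p l)..g (p i)} \<subseteq> g ` K i"
      by (intro connected_contains_Icc) auto
    then have "c i \<in> g ` K i"
      using assms(4)[OF that] by auto
    moreover have "K i \<subseteq> S"
      by (simp add: K_def connected_component_subset)
    ultimately show False using assms(3) by blast
  qed
  have "inj K" by (rule linorder_injI) (rule distinct)
  moreover have "range K \<subseteq> components S"
    using assms(2) componentsI by (auto simp: K_def)
  ultimately show ?thesis
    using range_inj_infinite infinite_super by blast
qed

lemma infinite_components_spiral_atom: "infinite (components (spiral_atom (Suc k)))"
proof (rule infinite_components_if_separating_levels)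
  let ?g = "\<lambda>q::real \<times> real. 2^Suc k * snd q"
  let ?p = "\<lambda>i. (f2 ^^ Suc k) (0, turning_height (2*i + 4))"
  show "continuous_on (spiral_atom (Suc k)) ?g"
    by (intro continuous_intros)
  show "?p i \<in> spiral_atom (Suc k)" for i
    using funpow_f2_turning_height_mem_spiral_atom by blast
  show "turning_height (2*i + 5) \<notin> ?g ` spiral_atom (Suc k)" for i
  proof
    assume "turning_height (2*i + 5) \<in> ?g ` spiral_atom (Suc k)"
    then obtain q where q: "q \<in> spiral_atom (Suc k)" "?g q = turning_height (2*i + 5)"
      by (rule imageE) simp
    have "turning_height (2*i + 5) \<in> gap_heights"
      using sin_minus_ln_turning_height[of "2*i + 5"] turning_height_pos
      by (simp add: gap_heights_def)
    with spiral_atom_heights[OF q(1)] q(2) show False by simp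
  qed
  have "?g (?p l) = turning_height (2*l + 4)" for l
    by (simp only: funpow_f2 snd_conv) simp
  then show "?g (?p l) < turning_height (2*i + 5) \<and> turning_height (2*i + 5) < ?g (?p i)"
    if "i < l" for i l
    using that by (auto intro!: turning_height_strict_antimono)
qed

lemma not_connected_if_infinite_components: "infinite (components S) \<Longrightarrow> \<not> connected S"
  by (metis components_eq_empty components_eq_sing_iff finite.emptyI finite_insert)

theorem proposition7:
  fixes f :: "real \<times> real \<Rightarrow> real \<times> real"
  assumes "f ` XX \<subseteq> XX"
    and "\<forall>p\<in>X1. f p = f1 p"
    and "\<forall>p\<in>X2. f p = f2 p"
    and "n \<ge> 2"
  shows "\<exists>is. length is = n \<and> set is \<subseteq> {1, 2} \<and>
           \<not> connected (atom f is) \<and> infinite (components (atom f is))"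
proof -
  obtain k where n: "n = Suc (Suc k)" using assms(4) by (metis add_2_eq_Suc le_Suc_ex)
  have "atom f (1 # replicate (Suc k) 2) = spiral_atom (Suc k)"
    using assms(2,3) by (rule atom_one_replicate_two)
  then show ?thesis
    using infinite_components_spiral_atom[of k] not_connected_if_infinite_components n
    by (intro exI[of _ "1 # replicate (Suc k) 2"]) auto
qed

end
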